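(* Let $\phi$ be a formula of $\mathcal{D}(\mathsf{M})$, $\mathfrak A$ a structure, and $Y\subseteq X$ teams over $\mathfrak A$ (whose domain contains the free variables of $\phi$). If $\mathfrak A\models_X\phi$ then $\mathfrak A\models_Y\phi$.
   Context: All structures are finite. Dependence logic with majority, $\mathcal{D}(\mathsf{M})[\tau]$: formulas over a vocabulary $\tau$ in negation normal form, built from first-order literals (atomic formulas and negated atomic formulas), dependence atoms $=\!(t_1,\dots,t_n)$ ($t_i$ terms) and their negations $\neg=\!(t_1,\dots,t_n)$, using $\wedge$, $\vee$, $\exists x$, $\forall x$ and $\mathsf{M}x$. Free variables are as in first-order logic ($\mathsf{M}x$ binds $x$), and the free variables of $=\!(t_1,\dots,t_n)$ are all variables occurring in $t_1,\dots,t_n$. A team $X$ over a structure $\mathfrak A$ with domain $A$ and with finite variable domain $\mathrm{dom}(X)$ is a set of assignments $s:\mathrm{dom}(X)\to A$. For $F:X\to A$ let $X(F/x)=\{s(F(s)/x): s\in X\}$ and $X(A/x)=\{s(a/x): s\in X, a\in A\}$, where $s(a/x)$ agrees with $s$ except that it maps $x$ to $a$. Satisfaction $\mathfrak A\models_X\phi$ (for teams whose domain contains the free variables of $\phi$): for a first-order literal, every $s\in X$ satisfies it in the usual sense; $\mathfrak A\models_X =\!(t_1,\dots,t_n)$ iff any $s,s'\in X$ giving equal values to $t_1,\dots,t_{n-1}$ give equal values to $t_n$ ($=\!()$ is always true); $\mathfrak A\models_X\neg=\!(t_1,\dots,t_n)$ iff $X=\emptyset$; $\mathfrak A\models_X\psi\wedge\chi$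 iff both hold; $\mathfrak A\models_X\psi\vee\chi$ iff $X=Y\cup Z$ with $\mathfrak A\models_Y\psi$ and $\mathfrak A\models_Z\chi$; $\mathfrak A\models_X\exists x\psi$ iff $\mathfrak A\models_{X(F/x)}\psi$ for some $F:X\to A$; $\mathfrak A\models_X\forall x\psi$ iff $\mathfrak A\models_{X(A/x)}\psi$; $\mathfrak A\models_X\mathsf{M}x\psi$ iff for at least $|A|^{|X|}/2$ many functions $F:X\to A$ we have $\mathfrak A\models_{X(F/x)}\psi$. A sentence $\phi$ is true in $\mathfrak A$ iff $\mathfrak A\models_{\{\emptyset\}}\phi$, where $\{\emptyset\}$ is the team containing only the empty assignment. *)

theory Defs
  imports Complex_Main "HOL-Library.FuncSet"
begin

datatype ('f, 'v) trm = Var 'v | Fn 'f "('f, 'v) trm list"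

text \<open>Formulas in negation normal form. A literal is atomic (polarity True) or
  negated atomic (polarity False); atomic formulas are equalities of terms and
  relation atoms.\<close>
datatype ('f, 'r, 'v) fm =
    EqLit bool "('f, 'v) trm" "('f, 'v) trm"
  | RelLit bool 'r "('f, 'v) trm list"
  | Dep "('f, 'v) trm list"
  | NDep "('f, 'v) trm list"
  | Conj "('f, 'r, 'v) fm" "('f, 'r, 'v) fm"
  | Disj "('f, 'r, 'v) fm" "('f, 'r, 'v) fm"
  | Ex 'v "('f, 'r, 'v) fm"
  | All 'v "('f, 'r, 'v) fm"
  | Maj 'v "('f, 'r, 'v) fm"

fun tvars :: "('f, 'v) trm \<Rightarrow> 'v set" where
  "tvars (Var v) = {v}"
| "tvars (Fn f ts) = (\<Union>t\<in>set ts. tvars t)"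

primrec fv :: "('f, 'r, 'v) fm \<Rightarrow> 'v set" where
  "fv (EqLit b t u) = tvars t \<union> tvars u"
| "fv (RelLit b R ts) = (\<Union>t\<in>set ts. tvars t)"
| "fv (Dep ts) = (\<Union>t\<in>set ts. tvars t)"
| "fv (NDep ts) = (\<Union>t\<in>set ts. tvars t)"
| "fv (Conj p q) = fv p \<union> fv q"
| "fv (Disj p q) = fv p \<union> fv q"
| "fv (Ex x p) = fv p - {x}"
| "fv (All x p) = fv p - {x}"
| "fv (Maj x p) = fv p - {x}"

record ('f, 'r) vocab =
  farity :: "'f \<Rightarrow> nat"
  rarity :: "'r \<Rightarrow> nat"

fun wf_trm :: "('f, 'r) vocab \<Rightarrow> ('f, 'v) trm \<Rightarrow> bool" where
  "wf_trm \<tau> (Var v) = True"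
| "wf_trm \<tau> (Fn f ts) = (length ts = farity \<tau> f \<and> (\<forall>t\<in>set ts. wf_trm \<tau> t))"

primrec wf_fm :: "('f, 'r) vocab \<Rightarrow> ('f, 'r, 'v) fm \<Rightarrow> bool" where
  "wf_fm \<tau> (EqLit b t u) = (wf_trm \<tau> t \<and> wf_trm \<tau> u)"
| "wf_fm \<tau> (RelLit b R ts) = (length ts = rarity \<tau> R \<and> (\<forall>t\<in>set ts. wf_trm \<tau> t))"
| "wf_fm \<tau> (Dep ts) = (\<forall>t\<in>set ts. wf_trm \<tau> t)"
| "wf_fm \<tau> (NDep ts) = (\<forall>t\<in>set ts. wf_trm \<tau> t)"
| "wf_fm \<tau> (Conj p q) = (wf_fm \<tau> p \<and> wf_fm \<tau> q)"
| "wf_fm \<tau> (Disj p q) = (wf_fm \<tau> p \<and> wf_fm \<tau> q)"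
| "wf_fm \<tau> (Ex x p) = wf_fm \<tau> p"
| "wf_fm \<tau> (All x p) = wf_fm \<tau> p"
| "wf_fm \<tau> (Maj x p) = wf_fm \<tau> p"

record ('a, 'f, 'r) struc =
  dom_of :: "'a set"
  fint :: "'f \<Rightarrow> 'a list \<Rightarrow> 'a"
  rint :: "'r \<Rightarrow> 'a list set"

definition is_struc :: "('f, 'r) vocab \<Rightarrow> ('a, 'f, 'r) struc \<Rightarrow> bool" where
  "is_struc \<tau> \<AA> \<longleftrightarrow> finite (dom_of \<AA>) \<and> dom_of \<AA> \<noteq> {} \<and>
     (\<forall>f as. length as = farity \<tau> f \<and> set as \<subseteq> dom_of \<AA> \<longrightarrow> fint \<AA> f as \<in> dom_of \<AA>) \<and>
     (\<forall>R as. as \<in> rint \<AA> R \<longrightarrow> length as = rarity \<tau> R \<and> set as \<subseteq> dom_of \<AA>)"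

type_synonym ('v, 'a) assign = "'v \<Rightarrow> 'a option"

definition is_team :: "('a, 'f, 'r) struc \<Rightarrow> 'v set \<Rightarrow> ('v, 'a) assign set \<Rightarrow> bool" where
  "is_team \<AA> V X \<longleftrightarrow> finite V \<and> (\<forall>s\<in>X. dom s = V \<and> ran s \<subseteq> dom_of \<AA>)"

fun teval :: "('a, 'f, 'r) struc \<Rightarrow> ('v, 'a) assign \<Rightarrow> ('f, 'v) trm \<Rightarrow> 'a" where
  "teval \<AA> s (Var v) = the (s v)"
| "teval \<AA> s (Fn f ts) = fint \<AA> f (map (teval \<AA> s) ts)"

definition supp_team :: "('v, 'a) assign set \<Rightarrow> (('v, 'a) assign \<Rightarrow> 'a) \<Rightarrow> 'v \<Rightarrow> ('v, 'a) assign set" where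
  "supp_team X F x = (\<lambda>s. s(x \<mapsto> F s)) ` X"

definition dup_team :: "('v, 'a) assign set \<Rightarrow> 'a set \<Rightarrow> 'v \<Rightarrow> ('v, 'a) assign set" where
  "dup_team X A x = {s(x \<mapsto> a) | s a. s \<in> X \<and> a \<in> A}"

primrec sat :: "('a, 'f, 'r) struc \<Rightarrow> ('v, 'a) assign set \<Rightarrow> ('f, 'r, 'v) fm \<Rightarrow> bool" where
  "sat \<AA> X (EqLit b t u) = (\<forall>s\<in>X. (teval \<AA> s t = teval \<AA> s u) = b)"
| "sat \<AA> X (RelLit b R ts) = (\<forall>s\<in>X. (map (teval \<AA> s) ts \<in> rint \<AA> R) = b)"
| "sat \<AA> X (Dep ts) = (ts = [] \<or>
      (\<forall>s\<in>X. \<forall>s'\<in>X. map (teval \<AA> s) (butlast ts) = map (teval \<AA> s') (butlast ts)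
          \<longrightarrow> teval \<AA> s (last ts) = teval \<AA> s' (last ts)))"
| "sat \<AA> X (NDep ts) = (X = {})"
| "sat \<AA> X (Conj p q) = (sat \<AA> X p \<and> sat \<AA> X q)"
| "sat \<AA> X (Disj p q) = (\<exists>Y Z. X = Y \<union> Z \<and> sat \<AA> Y p \<and> sat \<AA> Z q)"
| "sat \<AA> X (Ex x p) = (\<exists>F \<in> X \<rightarrow> dom_of \<AA>. sat \<AA> (supp_team X F x) p)"
| "sat \<AA> X (All x p) = sat \<AA> (dup_team X (dom_of \<AA>) x) p"
| "sat \<AA> X (Maj x p) =
      (real (card {F \<in> X \<rightarrow>\<^sub>E dom_of \<AA>. sat \<AA> (supp_team X F x) p})
         \<ge> real (card (dom_of \<AA>)) ^ card X / 2)"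

end

theory Submission
  imports Defs
begin

(* The only nontrivial case is the majority quantifier M x.  A good function
   F : X -> A (one with X(F/x) |= phi) restricts to a good function on Y, and
   restriction to Y is at most |A|^(|X|-|Y|)-to-one.  Hence the number of good
   functions on Y is at least (number on X) / |A|^(|X|-|Y|) >= |A|^|Y| / 2.
   This counting argument is isolated in the lemmas card_le_restrictions and
   majority_restrict. *)

text \<open>A function on X is determined by its restrictions to Y and to X - Y; hence
  a family G of functions X -> A whose restrictions to Y all lie in H has at most
  card H * card A ^ card (X - Y) members.\<close>
lemma card_le_restrictions:
  fixes A :: "'b set"
  assumes "finite A" "finite X" "Y \<subseteq> X"
    and G: "G \<subseteq> X \<rightarrow>\<^sub>E A" and H: "H \<subseteq> Y \<rightarrow>\<^sub>E A"
    and restr: "\<And>F. F \<in> G \<Longrightarrow> restrict F Y \<in> H"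
  shows "card G \<le> card H * card A ^ card (X - Y)"
proof -
  let ?split = "\<lambda>F. (restrict F Y, restrict F (X - Y))"
  have "finite (Y \<rightarrow>\<^sub>E A)"
    using assms(1-3) by (simp add: finite_PiE rev_finite_subset)
  then have "finite H" using H by (rule finite_subset[rotated])
  moreover have "finite (X - Y \<rightarrow>\<^sub>E A)"
    using assms(1,2) by (simp add: finite_PiE)
  moreover have "inj_on ?split G"
  proof (rule inj_onI)
    fix F F' assume "F \<in> G" "F' \<in> G" and eq: "?split F = ?split F'"
    then have "F \<in> extensional X" "F' \<in> extensional X" using G by (auto simp: PiE_def)
    moreover have "\<forall>s\<in>X. F s = F' s"
      using eq by (metis Diff_iff prod.inject restrict_apply')
    ultimately show "F = F'" by (metis extensionalityI)
  qed
  moreover have "?split ` G \<subseteq> H \<times> (X - Y \<rightarrow>\<^sub>E A)"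
    using G restr by (auto simp: PiE_def Pi_def extensional_def)
  ultimately have "card G \<le> card (H \<times> (X - Y \<rightarrow>\<^sub>E A))"
    by (meson card_inj_on_le finite_SigmaI)
  also have "\<dots> = card H * card A ^ card (X - Y)"
    using assms(2) by (simp add: card_cartesian_product card_PiE)
  finally show ?thesis .
qed

lemma majority_restrict:
  fixes A :: "'b set"
  assumes A: "finite A" "A \<noteq> {}" and X: "finite X" "Y \<subseteq> X"
    and restr: "\<And>F. F \<in> X \<rightarrow>\<^sub>E A \<Longrightarrow> P X F \<Longrightarrow> P Y (restrict F Y)"
    and major: "real (card {F \<in> X \<rightarrow>\<^sub>E A. P X F}) \<ge> real (card A) ^ card X / 2"
  shows "real (card {F \<in> Y \<rightarrow>\<^sub>E A. P Y F}) \<ge> real (card A) ^ card Y / 2"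
proof -
  let ?goodX = "{F \<in> X \<rightarrow>\<^sub>E A. P X F}"
  let ?goodY = "{F \<in> Y \<rightarrow>\<^sub>E A. P Y F}"
  let ?k = "card (X - Y)"
  have "card ?goodX \<le> card ?goodY * card A ^ ?k"
  proof (rule card_le_restrictions[OF A(1) X])
    fix F assume F: "F \<in> ?goodX"
    then have "restrict F Y \<in> Y \<rightarrow>\<^sub>E A" using X(2) by auto
    moreover have "P Y (restrict F Y)" using F restr by blast
    ultimately show "restrict F Y \<in> ?goodY" by blast
  qed (rule Collect_restrict)+
  then have fibres: "real (card ?goodX) \<le> real (card ?goodY) * real (card A) ^ ?k"
    using of_nat_mono by fastforce
  have "card X = card Y + ?k"
    using X card_Diff_subset[of Y X] card_mono[of X Y] finite_subset[of Y X] by simp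
  then have "real (card A) ^ card Y / 2 * real (card A) ^ ?k
      \<le> real (card ?goodY) * real (card A) ^ ?k"
    using major fibres by (simp add: power_add)
  moreover have "real (card A) ^ ?k > 0"
    using A by (simp add: card_gt_0_iff)
  ultimately show ?thesis by simp
qed

lemma supp_team_mono: "Y \<subseteq> X \<Longrightarrow> supp_team Y F x \<subseteq> supp_team X F x"
  by (auto simp: supp_team_def)

lemma supp_team_restrict: "supp_team Y (restrict F Y) x = supp_team Y F x"
  by (auto simp: supp_team_def)

lemma finite_supp_team: "finite X \<Longrightarrow> finite (supp_team X F x)"
  by (simp add: supp_team_def)

lemma dup_team_mono: "Y \<subseteq> X \<Longrightarrow> dup_team Y A x \<subseteq> dup_team X A x"
  by (auto simp: dup_team_def)

lemma finite_dup_team: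
  assumes "finite X" "finite A"
  shows "finite (dup_team X A x)"
proof -
  have "dup_team X A x = (\<lambda>(s, a). s(x \<mapsto> a)) ` (X \<times> A)"
    by (auto simp: dup_team_def)
  then show ?thesis using assms by simp
qed

lemma finite_team:
  assumes "is_team \<AA> V X" "finite (dom_of \<AA>)"
  shows "finite X"
proof (rule finite_subset)
  show "X \<subseteq> {s. dom s = V \<and> ran s \<subseteq> dom_of \<AA>}"
    using assms(1) by (auto simp: is_team_def)
  show "finite {s. dom s = V \<and> ran s \<subseteq> dom_of \<AA>}"
    using assms by (intro finite_set_of_finite_maps) (auto simp: is_team_def)
qed

text \<open>Every formula is downward closed on finite teams over a finite nonempty
  domain.\<close>
lemma sat_downward_closed:
  fixes \<phi> :: "('f, 'r, 'v) fm"
  assumes A: "finite (dom_of \<AA>)" "dom_of \<AA> \<noteq> {}"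
  shows "finite X \<Longrightarrow> Y \<subseteq> X \<Longrightarrow> sat \<AA> X \<phi> \<Longrightarrow> sat \<AA> Y \<phi>"
proof (induction \<phi> arbitrary: X Y)
  case (Disj p q)
  then obtain X1 X2 where split: "X = X1 \<union> X2" "sat \<AA> X1 p" "sat \<AA> X2 q" by auto
  have "sat \<AA> (Y \<inter> X1) p" "sat \<AA> (Y \<inter> X2) q"
    using Disj.IH Disj.prems(1) split by auto
  moreover have "Y = (Y \<inter> X1) \<union> (Y \<inter> X2)" using Disj.prems split by auto
  ultimately show ?case by auto
next
  case (Ex x p)
  then obtain F where F: "F \<in> X \<rightarrow> dom_of \<AA>" "sat \<AA> (supp_team X F x) p" by auto
  have "sat \<AA> (supp_team Y F x) p"
    using Ex.IH[OF finite_supp_team supp_team_mono] F(2) Ex.prems by blast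
  moreover have "F \<in> Y \<rightarrow> dom_of \<AA>" using F Ex.prems by auto
  ultimately show ?case by auto
next
  case (All x p)
  then show ?case
    using All.IH[OF finite_dup_team dup_team_mono] A by simp
next
  case (Maj x p)
  show ?case unfolding sat.simps
  proof (rule majority_restrict[where P = "\<lambda>X F. sat \<AA> (supp_team X F x) p"])
    fix F assume "sat \<AA> (supp_team X F x) p"
    then have "sat \<AA> (supp_team Y F x) p"
      using Maj.IH[OF finite_supp_team supp_team_mono] Maj.prems by blast
    then show "sat \<AA> (supp_team Y (restrict F Y) x) p"
      by (simp only: supp_team_restrict)
  qed (use Maj.prems A in auto)
qed auto

theorem mainTheorem2:
  fixes \<tau> :: "('f, 'r) vocab"
    and \<AA> :: "('a, 'f, 'r) struc"
    and \<phi> :: "('f, 'r, 'v) fm"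
    and V :: "'v set"
    and X Y :: "('v, 'a) assign set"
  assumes "wf_fm \<tau> \<phi>"
    and "is_struc \<tau> \<AA>"
    and "is_team \<AA> V X"
    and "fv \<phi> \<subseteq> V"
    and "Y \<subseteq> X"
    and "sat \<AA> X \<phi>"
  shows "sat \<AA> Y \<phi>"
proof -
  have A: "finite (dom_of \<AA>)" "dom_of \<AA> \<noteq> {}"
    using assms(2) by (auto simp: is_struc_def)
  have "finite X" using finite_team[OF assms(3) A(1)] .
  then show ?thesis using sat_downward_closed[OF A] assms(5,6) by blast
qed

end
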